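(* Let $0 < x < a$ and $w\in\mathbb{C}$ with $\mathrm{Re}[w]>0$. Then $$Z_\uparrow(w;x,a):=\mathbb{E}_x\big[\mathrm{e}^{-w\tau_{\uparrow a}(x)}\big]=\frac{Z_\uparrow(w;0,a)}{Z_\uparrow(w;0,x)},$$ where, for every $y>0$, $$Z_\uparrow(w;0,y):=\mathbb{E}_0\big[\mathrm{e}^{-w\tau_{\uparrow y}(0)}\big]=\frac{1}{1+w\sum_{n=1}^\infty \frac{y^n}{n!}\prod_{i=1}^{n-1}\big(w+\lambda-\lambda p^i\big)}.$$
   Context: Fix $\lambda>0$ and $p\in(0,1)$. The additive-increase multiplicative-decrease process $X=(X_t)_{t\ge0}$ started at $X_0=x\ge 0$ is defined as follows. Let $T_1<T_2<\cdots$ be the epochs of a Poisson process of rate $\lambda$. Between jump epochs, $X$ increases linearly with slope $1$, i.e. $\mathrm{d}X_t=\mathrm{d}t$. At each epoch $T_i$ the process jumps down to $X_{T_i}=pX_{T_i-}$. $\mathbb{P}_x,\mathbb{E}_x$ denote probability and expectation when $X_0=x$. For $a> x$, $\tau_{\uparrow a}(x)=\inf\{t\ge0: X_t>a\}$ under $X_0=x$ (upward first passage time). *)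

theory Defs
  imports "HOL-Probability.Probability"
begin

text \<open>Sample space: i.i.d. Exp(lam) inter-arrival times of the Poisson process.\<close>
definition aimd_space :: "real \<Rightarrow> (nat \<Rightarrow> real) measure" where
  "aimd_space lam = PiM UNIV (\<lambda>_::nat. density lborel (exponential_density lam))"

definition aimd_T :: "(nat \<Rightarrow> real) \<Rightarrow> nat \<Rightarrow> real" where
  "aimd_T e k = (\<Sum>i<k. e i)"

text \<open>Post-jump values: Y 0 = x, Y (k+1) = p * X(T (k+1) -).\<close>
fun aimd_Y :: "real \<Rightarrow> real \<Rightarrow> (nat \<Rightarrow> real) \<Rightarrow> nat \<Rightarrow> real" where
  "aimd_Y p x e 0 = x"
| "aimd_Y p x e (Suc k) = p * (aimd_Y p x e k + e k)"

text \<open>Path of the AIMD process started at x (cadlag).\<close>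
definition aimd_X :: "real \<Rightarrow> real \<Rightarrow> (nat \<Rightarrow> real) \<Rightarrow> real \<Rightarrow> real" where
  "aimd_X p x e t = (let k = (LEAST k. t < aimd_T e (Suc k)) in aimd_Y p x e k + (t - aimd_T e k))"

definition tau_up :: "real \<Rightarrow> real \<Rightarrow> real \<Rightarrow> (nat \<Rightarrow> real) \<Rightarrow> real" where
  "tau_up p x a e = Inf {t. 0 \<le> t \<and> aimd_X p x e t > a}"

definition Z_up :: "real \<Rightarrow> real \<Rightarrow> complex \<Rightarrow> real \<Rightarrow> real \<Rightarrow> complex" where
  "Z_up lam p w x a = integral\<^sup>L (aimd_space lam) (\<lambda>e. exp (- w * complex_of_real (tau_up p x a e)))"

end

theory Submission
  imports Defs
begin

text \<open>
  Let S be the first inter-arrival time, exponential with rate lam. Splitting at the first jump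
  and using the product structure of the inter-arrival sequence, Z(x) = E_x[exp(-w tau)] satisfies,
  for 0 \<le> x \<le> a, the renewal equation
    Z(x) = E[exp(-w (a - x)); S > a - x] + E[exp(-w S) Z(p (x + S)); S \<le> a - x].
  The entire function H(z) = \<Sum>n z^n/n! \<Prod>i<n (w + lam - lam p^i) solves the delay
  equation H' = (w + lam) H - lam H(p \<cdot>), and integrating this against the exponential density
  shows that x \<mapsto> H(x) satisfies the same equation with boundary value H(a) in place of 1.
  Hence Z(x) H(a) - H(x) solves the homogeneous equation, which contracts bounded functions on
  [0, a) by the factor P(S \<le> a) < 1; so Z(x) H(a) = H(x). At x = 0 this gives
  Z(0, a) = 1 / H(a), and the ratio formula follows.
\<close>

section \<open>The entire function H\<close>

definition aimd_prod :: "complex \<Rightarrow> real \<Rightarrow> real \<Rightarrow> nat \<Rightarrow> complex" where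
  "aimd_prod w lam p n = (\<Prod>i\<in>{1..n}. w + complex_of_real lam - complex_of_real (lam * p ^ i))"

definition aimd_coeff :: "complex \<Rightarrow> real \<Rightarrow> real \<Rightarrow> nat \<Rightarrow> complex" where
  "aimd_coeff w lam p n = (if n = 0 then 1 else w * aimd_prod w lam p (n - 1) / fact n)"

definition aimd_H :: "complex \<Rightarrow> real \<Rightarrow> real \<Rightarrow> complex \<Rightarrow> complex" where
  "aimd_H w lam p z = (\<Sum>n. aimd_coeff w lam p n * z ^ n)"

lemma aimd_prod_Suc:
  "aimd_prod w lam p (Suc n) =
     aimd_prod w lam p n * (w + complex_of_real lam - complex_of_real (lam * p ^ Suc n))"
  unfolding aimd_prod_def by (simp add: prod.nat_ivl_Suc' mult.commute)

lemma norm_aimd_prod_le: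
  assumes "0 \<le> lam" "0 \<le> p" "p \<le> 1"
  shows "norm (aimd_prod w lam p n) \<le> (cmod w + lam) ^ n"
proof -
  have "norm (w + complex_of_real lam - complex_of_real (lam * p ^ i)) \<le> cmod w + lam" for i
  proof -
    have "0 \<le> p ^ i" "p ^ i \<le> 1"
      using assms by (simp_all add: power_le_one)
    then have "norm (complex_of_real (lam * (1 - p ^ i))) \<le> lam"
      using assms by (simp add: abs_mult mult_left_le del: of_real_mult of_real_diff)
    moreover have "w + complex_of_real lam - complex_of_real (lam * p ^ i)
        = w + complex_of_real (lam * (1 - p ^ i))"
      by (simp add: algebra_simps)
    ultimately show ?thesis
      by (metis norm_triangle_ineq add_left_mono order_trans)
  qed
  then have "norm (aimd_prod w lam p n) \<le> (\<Prod>i\<in>{1..n}. cmod w + lam)"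
    unfolding aimd_prod_def prod_norm[symmetric] by (intro prod_mono) auto
  then show ?thesis by simp
qed

lemma norm_aimd_coeff_le:
  assumes "0 \<le> lam" "0 \<le> p" "p \<le> 1"
  shows "norm (aimd_coeff w lam p n) \<le> (cmod w + lam) ^ n / fact n"
proof (cases n)
  case 0
  then show ?thesis by (simp add: aimd_coeff_def)
next
  case (Suc m)
  let ?R = "cmod w + lam"
  have "norm (aimd_coeff w lam p n) = cmod w * norm (aimd_prod w lam p m) / fact n"
    using Suc by (simp add: aimd_coeff_def norm_mult norm_divide del: fact_Suc)
  also have "\<dots> \<le> ?R * ?R ^ m / fact n"
    using assms norm_aimd_prod_le[OF assms, of w m] by (intro divide_right_mono mult_mono) auto
  finally show ?thesis using Suc by simp
qed

lemma summable_aimd_coeff: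
  assumes "0 \<le> lam" "0 \<le> p" "p \<le> 1"
  shows "summable (\<lambda>n. aimd_coeff w lam p n * z ^ n)"
proof (rule summable_comparison_test)
  let ?R = "cmod w + lam"
  show "\<exists>N. \<forall>n\<ge>N. norm (aimd_coeff w lam p n * z ^ n) \<le> (?R * cmod z) ^ n / fact n"
  proof (intro exI allI impI)
    fix n
    have "norm (aimd_coeff w lam p n * z ^ n) = norm (aimd_coeff w lam p n) * cmod z ^ n"
      by (simp add: norm_mult norm_power)
    also have "\<dots> \<le> ?R ^ n / fact n * cmod z ^ n"
      by (intro mult_right_mono norm_aimd_coeff_le assms) simp
    finally show "norm (aimd_coeff w lam p n * z ^ n) \<le> (?R * cmod z) ^ n / fact n"
      by (simp add: power_mult_distrib)
  qed
  show "summable (\<lambda>n. (?R * cmod z) ^ n / fact n)"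
    using summable_exp[of "?R * cmod z"] by (simp add: divide_inverse mult.commute)
qed

lemma diffs_aimd_coeff:
  "diffs (aimd_coeff w lam p) n =
     (w + complex_of_real lam - complex_of_real (lam * p ^ n)) * aimd_coeff w lam p n"
proof (cases n)
  case 0
  then show ?thesis by (simp add: diffs_def aimd_coeff_def aimd_prod_def)
next
  case (Suc m)
  have "diffs (aimd_coeff w lam p) n = of_nat (Suc n) * (w * aimd_prod w lam p n / fact (Suc n))"
    by (simp add: diffs_def aimd_coeff_def)
  also have "\<dots> = w * aimd_prod w lam p n / fact n"
    by (simp add: field_simps del: of_nat_Suc)
  finally show ?thesis
    using Suc by (simp add: aimd_coeff_def aimd_prod_Suc field_simps)
qed

lemma aimd_H_has_field_derivative:
  assumes "0 \<le> lam" "0 \<le> p" "p \<le> 1"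
  shows "(aimd_H w lam p has_field_derivative
      (w + complex_of_real lam) * aimd_H w lam p z
        - complex_of_real lam * aimd_H w lam p (complex_of_real p * z)) (at z)"
proof -
  let ?c = "aimd_coeff w lam p"
  have s: "summable (\<lambda>n. ?c n * z ^ n)" "summable (\<lambda>n. ?c n * (complex_of_real p * z) ^ n)"
    by (rule summable_aimd_coeff[OF assms])+
  have "(\<Sum>n. diffs ?c n * z ^ n) =
      (\<Sum>n. (w + complex_of_real lam) * (?c n * z ^ n)
             - complex_of_real lam * (?c n * (complex_of_real p * z) ^ n))"
    by (intro suminf_cong) (simp add: diffs_aimd_coeff algebra_simps power_mult_distrib)
  also have "\<dots> = (\<Sum>n. (w + complex_of_real lam) * (?c n * z ^ n))
      - (\<Sum>n. complex_of_real lam * (?c n * (complex_of_real p * z) ^ n))"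
    by (rule suminf_diff[OF summable_mult[OF s(1)] summable_mult[OF s(2)], symmetric])
  also have "\<dots> = (w + complex_of_real lam) * aimd_H w lam p z
      - complex_of_real lam * aimd_H w lam p (complex_of_real p * z)"
    unfolding aimd_H_def by (simp add: suminf_mult[OF s(1)] suminf_mult[OF s(2)])
  moreover have "(aimd_H w lam p has_field_derivative (\<Sum>n. diffs ?c n * z ^ n)) (at z)"
    unfolding aimd_H_def[abs_def]
    by (rule termdiffs_strong_converges_everywhere) (rule summable_aimd_coeff[OF assms])
  ultimately show ?thesis by simp
qed

lemma aimd_H_has_field_derivative_chain[derivative_intros]:
  assumes "0 \<le> lam" "0 \<le> p" "p \<le> 1"
    and "(f has_field_derivative f') (at z within S)"
  shows "((\<lambda>z. aimd_H w lam p (f z)) has_field_derivative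
      ((w + complex_of_real lam) * aimd_H w lam p (f z)
         - complex_of_real lam * aimd_H w lam p (complex_of_real p * f z)) * f') (at z within S)"
  by (rule DERIV_chain2[OF aimd_H_has_field_derivative[OF assms(1-3)] assms(4)])

lemma continuous_on_aimd_H:
  assumes "0 \<le> lam" "0 \<le> p" "p \<le> 1"
  shows "continuous_on A (aimd_H w lam p)"
  using DERIV_isCont[OF aimd_H_has_field_derivative[OF assms]]
  by (intro continuous_at_imp_continuous_on) blast

lemma aimd_H_0 [simp]: "aimd_H w lam p 0 = 1"
  unfolding aimd_H_def by (simp add: aimd_coeff_def)

lemma aimd_H_of_real:
  assumes "0 \<le> lam" "0 \<le> p" "p \<le> 1" "w \<noteq> 0"
  shows "aimd_H w lam p (complex_of_real y) =
    1 + w * (\<Sum>n. complex_of_real (y ^ Suc n / fact (Suc n))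
                    * (\<Prod>i\<in>{1..n}. w + complex_of_real lam - complex_of_real (lam * p ^ i)))"
proof -
  let ?f = "\<lambda>n. aimd_coeff w lam p n * complex_of_real y ^ n"
  let ?g = "\<lambda>n. complex_of_real (y ^ Suc n / fact (Suc n)) * aimd_prod w lam p n"
  have sf: "summable ?f" by (rule summable_aimd_coeff[OF assms(1-3)])
  have fg: "?f (Suc n) = w * ?g n" for n
    by (simp add: aimd_coeff_def field_simps)
  have "summable (\<lambda>n. w * ?g n)"
    using summable_Suc_iff[of ?f] sf unfolding fg by simp
  then have sg: "summable ?g"
    using assms(4) summable_cmult_iff[of w ?g] by blast
  have "aimd_H w lam p (complex_of_real y) = ?f 0 + (\<Sum>n. ?f (Suc n))"
    unfolding aimd_H_def using suminf_split_head[OF sf] by simp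
  also have "\<dots> = 1 + w * (\<Sum>n. ?g n)"
    unfolding fg suminf_mult[OF sg] by (simp add: aimd_coeff_def)
  finally show ?thesis by (simp add: aimd_prod_def)
qed

section \<open>The renewal equation for H\<close>

abbreviation exp_law :: "real \<Rightarrow> real measure" where
  "exp_law lam \<equiv> density lborel (exponential_density lam)"

lemma prob_space_exp_law: "0 < lam \<Longrightarrow> prob_space (exp_law lam)"
  by (rule prob_space_exponential_density)

lemma distributed_exp_law: "distributed (exp_law lam) lborel (\<lambda>s. s) (exponential_density lam)"
  unfolding distributed_def by (simp add: distr_id2)

lemma measure_exp_law_greaterThan:
  assumes "0 < lam" "0 \<le> b"
  shows "measure (exp_law lam) {b<..} = exp (- b * lam)"
proof -
  interpret prob_space "exp_law lam" by (rule prob_space_exp_law[OF assms(1)])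
  show ?thesis
    using exponential_distributedD_gt[OF distributed_exp_law assms(2,1)] by (simp add: greaterThan_def)
qed

lemma measure_exp_law_atMost:
  assumes "0 < lam" "0 \<le> b"
  shows "measure (exp_law lam) {..b} = 1 - exp (- b * lam)"
proof -
  interpret prob_space "exp_law lam" by (rule prob_space_exp_law[OF assms(1)])
  show ?thesis
    using exponential_distributedD_le[OF distributed_exp_law assms(2,1)] by (simp add: atMost_def)
qed

lemma AE_exp_law_nonneg: "AE s in exp_law lam. 0 \<le> s"
  by (subst AE_density) (auto simp: exponential_density_def)

lemma aimd_H_delay_integral:
  assumes lam: "0 < lam" and p: "0 \<le> p" "p \<le> 1" and b: "0 \<le> b"
  shows "has_bochner_integral (exp_law lam)
      (\<lambda>s. indicator {0..b} s *\<^sub>R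
         (exp (- w * complex_of_real s) * aimd_H w lam p (complex_of_real (p * (x + s)))))
      (aimd_H w lam p (complex_of_real x)
         - exp (- (complex_of_real lam + w) * complex_of_real b) * aimd_H w lam p (complex_of_real (x + b)))"
proof -
  interpret prob_space "exp_law lam"
    by (rule prob_space_exp_law[OF lam])
  let ?H = "aimd_H w lam p"
  have lp: "0 \<le> lam" "0 \<le> p" "p \<le> 1"
    using lam p by auto
  define g where "g s = exp (- w * complex_of_real s) * ?H (complex_of_real (p * (x + s)))" for s
  have g_cont: "continuous_on A g" for A
    unfolding g_def by (intro continuous_intros continuous_on_compose2[OF continuous_on_aimd_H[OF lp]]) auto
  have g_meas: "g \<in> borel_measurable borel"
    by (rule borel_measurable_continuous_onI[OF g_cont])
  obtain B where B: "\<And>s. s \<in> {0..b} \<Longrightarrow> norm (g s) \<le> B"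
    using compact_imp_bounded[OF compact_continuous_image[OF g_cont compact_Icc]]
    unfolding bounded_iff by blast
  have int: "integrable (exp_law lam) (\<lambda>s. indicator {0..b} s *\<^sub>R g s)"
  proof (rule integrable_const_bound[where B = "max 0 B"])
    show "AE s in exp_law lam. norm (indicator {0..b} s *\<^sub>R g s) \<le> max 0 B"
      using B by (intro AE_I2) (simp add: indicator_def le_max_iff_disj)
  qed (use g_meas in simp)
  text \<open>By the delay equation for H, K is a primitive of the density-weighted integrand f.\<close>
  define K where "K z = - (exp (- (complex_of_real lam + w) * z) * ?H (complex_of_real x + z))" for z
  define f where "f s = complex_of_real lam * exp (- (complex_of_real lam + w) * complex_of_real s) *
      ?H (complex_of_real p * (complex_of_real x + complex_of_real s))" for s
  have K_deriv: "(K has_field_derivative f s) (at (complex_of_real s))" for s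
    unfolding K_def f_def
    by (rule derivative_eq_intros refl lp | simp)+ (simp add: algebra_simps)
  have f_cont: "continuous_on {0..b} f"
    unfolding f_def by (intro continuous_intros continuous_on_compose2[OF continuous_on_aimd_H[OF lp]]) auto
  have density: "exponential_density lam s *\<^sub>R (indicator {0..b} s *\<^sub>R g s) = indicator {0..b} s *\<^sub>R f s" for s
  proof (cases "s \<in> {0..b}")
    case True
    then have "exponential_density lam s = lam * exp (- s * lam)"
      by (simp add: exponential_density_def)
    moreover have "exp (- (complex_of_real lam + w) * complex_of_real s)
        = complex_of_real (exp (- s * lam)) * exp (- w * complex_of_real s)"
      by (simp add: mult_exp_exp flip: exp_of_real) (simp add: algebra_simps)
    ultimately show ?thesis
      using True by (simp add: f_def g_def scaleR_conv_of_real mult_ac)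
  qed simp
  have "(\<integral>s. indicator {0..b} s *\<^sub>R g s \<partial>exp_law lam)
      = (\<integral>s. exponential_density lam s *\<^sub>R (indicator {0..b} s *\<^sub>R g s) \<partial>lborel)"
    using g_meas by (intro integral_density) (auto simp: exponential_density_nonneg[OF lam])
  also have "\<dots> = K (complex_of_real b) - K 0"
    unfolding density
    using integral_FTC_atLeastAtMost[OF b has_vector_derivative_real_field[OF K_deriv] f_cont] by simp
  finally show ?thesis
    using int by (simp add: has_bochner_integral_iff K_def g_def)
qed

lemma aimd_H_renewal:
  assumes lam: "0 < lam" and p: "0 \<le> p" "p \<le> 1" and x: "0 \<le> x" "x \<le> a"
  shows "has_bochner_integral (exp_law lam)
      (\<lambda>s. if a - x < s then exp (- w * complex_of_real (a - x)) * aimd_H w lam p (complex_of_real a)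
           else exp (- w * complex_of_real s) * aimd_H w lam p (complex_of_real (p * (x + s))))
      (aimd_H w lam p (complex_of_real x))"
proof -
  interpret prob_space "exp_law lam"
    by (rule prob_space_exp_law[OF lam])
  let ?H = "aimd_H w lam p"
  have lp: "0 \<le> lam" "0 \<le> p" "p \<le> 1"
    using lam p by auto
  define b where "b = a - x"
  have b: "0 \<le> b"
    using x by (simp add: b_def)
  define c where "c = exp (- w * complex_of_real b) * ?H (complex_of_real a)"
  define g where "g s = exp (- w * complex_of_real s) * ?H (complex_of_real (p * (x + s)))" for s
  have g_meas: "g \<in> borel_measurable borel"
    unfolding g_def using lp
    by (intro borel_measurable_continuous_onI continuous_intros
        continuous_on_compose2[OF continuous_on_aimd_H[OF lp], of UNIV]) auto
  have "has_bochner_integral (exp_law lam) (indicator {b<..}) (exp (- b * lam))"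
    using has_bochner_integral_real_indicator[of "{b<..}" "exp_law lam"]
    by (simp add: measure_exp_law_greaterThan[OF lam b] emeasure_finite less_top[symmetric])
  then have "has_bochner_integral (exp_law lam) (\<lambda>s. indicator {b<..} s *\<^sub>R c) (exp (- b * lam) *\<^sub>R c)"
    by (rule has_bochner_integral_scaleR_left)
  from has_bochner_integral_add[OF this aimd_H_delay_integral[OF lam p b, of w x]]
  have "has_bochner_integral (exp_law lam) (\<lambda>s. indicator {b<..} s *\<^sub>R c + indicator {0..b} s *\<^sub>R g s)
      (?H (complex_of_real x))"
    by (simp add: c_def g_def b_def scaleR_conv_of_real mult_exp_exp algebra_simps flip: exp_of_real)
  moreover have "AE s in exp_law lam.
      indicator {b<..} s *\<^sub>R c + indicator {0..b} s *\<^sub>R g s = (if a - x < s then c else g s)"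
    using AE_exp_law_nonneg by eventually_elim (auto simp: indicator_def b_def)
  ultimately have "has_bochner_integral (exp_law lam) (\<lambda>s. if a - x < s then c else g s) (?H (complex_of_real x))"
    using g_meas by (subst (asm) has_bochner_integral_cong_AE) simp_all
  then show ?thesis
    by (simp only: c_def g_def b_def)
qed

section \<open>Paths\<close>

lemma aimd_T_Suc: "aimd_T e (Suc k) = aimd_T e k + e k"
  unfolding aimd_T_def by simp

lemma aimd_T_mono: "(\<And>i. 0 \<le> e i) \<Longrightarrow> j \<le> k \<Longrightarrow> aimd_T e j \<le> aimd_T e k"
  unfolding aimd_T_def by (intro sum_mono2) auto

lemma aimd_T_nonneg: "(\<And>i. 0 \<le> e i) \<Longrightarrow> 0 \<le> aimd_T e k"
  unfolding aimd_T_def by (intro sum_nonneg) auto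

lemma aimd_Y_nonneg: "0 \<le> x \<Longrightarrow> 0 \<le> p \<Longrightarrow> (\<And>i. 0 \<le> e i) \<Longrightarrow> 0 \<le> aimd_Y p x e k"
  by (induct k) auto

lemma aimd_X_right_linear:
  "\<exists>d>0. \<forall>s. t \<le> s \<and> s < t + d \<longrightarrow> aimd_X p x e s = aimd_X p x e t + (s - t)"
proof (cases "\<exists>k. t < aimd_T e (Suc k)")
  case True
  define k where "k = (LEAST k. t < aimd_T e (Suc k))"
  have k: "t < aimd_T e (Suc k)"
    using True unfolding k_def by (meson LeastI_ex)
  have before: "\<not> t < aimd_T e (Suc j)" if "j < k" for j
    using that unfolding k_def by (rule not_less_Least)
  show ?thesis
  proof (intro exI[of _ "aimd_T e (Suc k) - t"] conjI allI impI)
    fix s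
    assume s: "t \<le> s \<and> s < t + (aimd_T e (Suc k) - t)"
    have "(LEAST j. s < aimd_T e (Suc j)) = k"
    proof (rule Least_equality)
      fix j
      assume "s < aimd_T e (Suc j)"
      then show "k \<le> j"
        using before[of j] s by force
    qed (use s in simp)
    then show "aimd_X p x e s = aimd_X p x e t + (s - t)"
      unfolding aimd_X_def Let_def k_def[symmetric] by simp
  qed (use k in simp)
next
  case False
  then have "\<not> s < aimd_T e (Suc j)" if "t \<le> s" for s j
    using that by (meson le_less_trans)
  then show ?thesis
    by (intro exI[of _ 1]) (simp add: aimd_X_def Let_def)
qed

definition passage_set :: "real \<Rightarrow> real \<Rightarrow> real \<Rightarrow> (nat \<Rightarrow> real) \<Rightarrow> real set" where
  "passage_set p x a e = {t. 0 \<le> t \<and> a < aimd_X p x e t}"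

lemma tau_up_eq_Inf_passage_set: "tau_up p x a e = Inf (passage_set p x a e)"
  unfolding tau_up_def passage_set_def by simp

lemma bdd_below_passage_set [simp]: "bdd_below (passage_set p x a e)"
  unfolding passage_set_def bdd_below_def by auto

lemma passage_set_Rats_approx:
  assumes "t \<in> passage_set p x a e" "0 < \<epsilon>"
  obtains q where "q \<in> \<rat>" "q \<in> passage_set p x a e" "q < t + \<epsilon>"
proof -
  obtain d where d: "d > 0" "\<And>s. t \<le> s \<and> s < t + d \<Longrightarrow> aimd_X p x e s = aimd_X p x e t + (s - t)"
    using aimd_X_right_linear by blast
  have "t < t + min d \<epsilon>"
    using d(1) assms(2) by simp
  then obtain q where q: "q \<in> \<rat>" "t < q" "q < t + min d \<epsilon>"
    using Rats_dense_in_real by blast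
  have "aimd_X p x e q = aimd_X p x e t + (q - t)"
    using q(2,3) by (intro d(2)) simp
  then have "q \<in> passage_set p x a e"
    using assms(1) q(2) by (simp add: passage_set_def)
  moreover have "q < t + \<epsilon>"
    using q(3) by simp
  ultimately show ?thesis
    using that q(1) by blast
qed

lemma passage_set_Int_Rats_eq_empty_iff:
  "passage_set p x a e \<inter> \<rat> = {} \<longleftrightarrow> passage_set p x a e = {}"
proof
  assume "passage_set p x a e \<inter> \<rat> = {}"
  then show "passage_set p x a e = {}"
    by (metis disjoint_iff passage_set_Rats_approx zero_less_one equals0I)
qed simp

lemma Inf_passage_set_Rats:
  assumes "passage_set p x a e \<noteq> {}"
  shows "Inf (passage_set p x a e) = Inf (passage_set p x a e \<inter> \<rat>)"
proof (rule antisym)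
  let ?A = "passage_set p x a e"
  have "?A \<inter> \<rat> \<noteq> {}"
    using assms by (simp add: passage_set_Int_Rats_eq_empty_iff)
  then show "Inf ?A \<le> Inf (?A \<inter> \<rat>)"
    by (intro cInf_superset_mono) auto
  have "Inf (?A \<inter> \<rat>) \<le> t" if "t \<in> ?A" for t
  proof (rule field_le_epsilon)
    fix \<epsilon> :: real
    assume "0 < \<epsilon>"
    then obtain q where q: "q \<in> \<rat>" "q \<in> ?A" "q < t + \<epsilon>"
      using passage_set_Rats_approx[OF \<open>t \<in> ?A\<close>] by blast
    have "bdd_below (?A \<inter> \<rat>)"
      by (rule bdd_below_mono[OF bdd_below_passage_set]) auto
    then have "Inf (?A \<inter> \<rat>) \<le> q"
      using q by (intro cInf_lower) auto
    with q(3) show "Inf (?A \<inter> \<rat>) \<le> t + \<epsilon>"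
      by simp
  qed
  then show "Inf (?A \<inter> \<rat>) \<le> Inf ?A"
    using assms by (intro cInf_greatest) auto
qed

text \<open>For measurability, the infimum is taken over rational times, and the possibly empty
  passage set is handled in the extended reals.\<close>

lemma tau_up_Rats:
  "tau_up p x a e = (if \<exists>q\<in>\<rat> \<inter> {0..}. a < aimd_X p x e q
     then real_of_ereal (INF q\<in>\<rat> \<inter> {0..}. if a < aimd_X p x e q then ereal q else \<infinity>)
     else Inf {})"
proof -
  let ?A = "passage_set p x a e"
  have iff: "(\<exists>q\<in>\<rat> \<inter> {0..}. a < aimd_X p x e q) \<longleftrightarrow> ?A \<inter> \<rat> \<noteq> {}"
    unfolding passage_set_def by auto
  show ?thesis
  proof (cases "?A \<inter> \<rat> = {}")
    case True
    then have "?A = {}"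
      by (simp add: passage_set_Int_Rats_eq_empty_iff)
    then show ?thesis
      using True iff by (simp add: tau_up_eq_Inf_passage_set)
  next
    case False
    have "(INF q\<in>\<rat> \<inter> {0..}. if a < aimd_X p x e q then ereal q else \<infinity>) = (INF q\<in>?A \<inter> \<rat>. ereal q)"
    proof (rule antisym)
      show "(INF q\<in>\<rat> \<inter> {0..}. if a < aimd_X p x e q then ereal q else \<infinity>) \<le> (INF q\<in>?A \<inter> \<rat>. ereal q)"
        by (rule INF_greatest, rule INF_lower2[where i = "_"]) (auto simp: passage_set_def)
      show "(INF q\<in>?A \<inter> \<rat>. ereal q) \<le> (INF q\<in>\<rat> \<inter> {0..}. if a < aimd_X p x e q then ereal q else \<infinity>)"
        by (rule INF_greatest) (auto intro: INF_lower simp: passage_set_def)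
    qed
    also have "\<dots> = ereal (Inf (?A \<inter> \<rat>))"
      using False by (simp add: ereal_Inf' bdd_below_mono[OF bdd_below_passage_set])
    finally show ?thesis
      using False iff Inf_passage_set_Rats[of p x a e] by (auto simp: tau_up_eq_Inf_passage_set)
  qed
qed

lemma measurable_component_aimd_space [measurable]:
  "(\<lambda>e. e i) \<in> borel_measurable (aimd_space lam)"
  unfolding aimd_space_def by measurable

lemma measurable_aimd_T [measurable]: "(\<lambda>e. aimd_T e k) \<in> borel_measurable (aimd_space lam)"
  unfolding aimd_T_def by measurable

lemma measurable_aimd_Y [measurable]: "(\<lambda>e. aimd_Y p x e k) \<in> borel_measurable (aimd_space lam)"
  by (induct k) simp_all

lemma measurable_aimd_X [measurable]: "(\<lambda>e. aimd_X p x e t) \<in> borel_measurable (aimd_space lam)"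
proof -
  have "(\<lambda>e. LEAST k. t < aimd_T e (Suc k)) \<in> measurable (aimd_space lam) (count_space UNIV)"
    by measurable
  then have "(\<lambda>e. (\<lambda>k e. aimd_Y p x e k + (t - aimd_T e k)) (LEAST k. t < aimd_T e (Suc k)) e)
      \<in> borel_measurable (aimd_space lam)"
    by (rule measurable_compose_countable'[rotated]) auto
  then show ?thesis
    unfolding aimd_X_def Let_def by simp
qed

lemma measurable_tau_up [measurable]: "(\<lambda>e. tau_up p x a e) \<in> borel_measurable (aimd_space lam)"
proof -
  have "countable (\<rat> \<inter> {0::real..})"
    using countable_rat by blast
  then show ?thesis
    unfolding tau_up_Rats by measurable
qed

definition regular_path :: "real \<Rightarrow> (nat \<Rightarrow> real) \<Rightarrow> bool" where
  "regular_path a \<omega> \<longleftrightarrow> (\<forall>i. 0 \<le> \<omega> i) \<and> (\<exists>k. a < \<omega> k)"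

lemma regular_path_passage_before_jump:
  assumes "regular_path a \<omega>" "0 \<le> x" "0 \<le> p" "0 \<le> a"
  obtains t0 k where "t0 \<in> passage_set p x a \<omega>" "t0 < aimd_T \<omega> (Suc k)"
proof -
  obtain k where k: "a < \<omega> k" and nonneg: "\<And>i. 0 \<le> \<omega> i"
    using assms(1) unfolding regular_path_def by auto
  obtain u where u: "a < u" "u < \<omega> k"
    using k dense by blast
  define t0 where "t0 = aimd_T \<omega> k + u"
  have t0_lt: "t0 < aimd_T \<omega> (Suc k)"
    unfolding t0_def aimd_T_Suc using u by simp
  have "(LEAST j. t0 < aimd_T \<omega> (Suc j)) = k"
  proof (rule Least_equality)
    fix j
    assume j: "t0 < aimd_T \<omega> (Suc j)"
    show "k \<le> j"
    proof (rule ccontr)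
      assume "\<not> k \<le> j"
      then have "aimd_T \<omega> (Suc j) \<le> aimd_T \<omega> k"
        using aimd_T_mono[of \<omega> "Suc j" k] nonneg by simp
      with j show False
        unfolding t0_def using u assms(4) by simp
    qed
  qed (rule t0_lt)
  then have "aimd_X p x \<omega> t0 = aimd_Y p x \<omega> k + u"
    unfolding aimd_X_def Let_def t0_def by simp
  moreover have "0 \<le> aimd_Y p x \<omega> k"
    using aimd_Y_nonneg assms nonneg by blast
  moreover have "0 \<le> t0"
    unfolding t0_def using aimd_T_nonneg[of \<omega> k] nonneg u assms(4) by simp
  ultimately have "t0 \<in> passage_set p x a \<omega>"
    using u by (simp add: passage_set_def)
  with t0_lt show ?thesis
    using that by blast
qed

lemma tau_up_nonneg:
  assumes "regular_path a \<omega>" "0 \<le> x" "0 \<le> p" "0 \<le> a"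
  shows "0 \<le> tau_up p x a \<omega>"
proof -
  obtain t0 where "t0 \<in> passage_set p x a \<omega>"
    using regular_path_passage_before_jump[OF assms] by blast
  then show ?thesis
    unfolding tau_up_eq_Inf_passage_set by (intro cInf_greatest) (auto simp: passage_set_def)
qed

lemma aimd_Y_case_nat_Suc: "aimd_Y p x (case_nat s \<omega>) (Suc m) = aimd_Y p (p * (x + s)) \<omega> m"
  by (induct m) auto

lemma aimd_T_case_nat_Suc: "aimd_T (case_nat s \<omega>) (Suc k) = s + aimd_T \<omega> k"
  by (induct k) (auto simp: aimd_T_def)

lemma aimd_X_case_nat_before_jump:
  assumes "t < s"
  shows "aimd_X p x (case_nat s \<omega>) t = x + t"
proof -
  have "(LEAST j. t < aimd_T (case_nat s \<omega>) (Suc j)) = 0"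
    using assms by (intro Least_equality) (simp_all add: aimd_T_case_nat_Suc[of s \<omega> 0] aimd_T_def)
  then show ?thesis
    unfolding aimd_X_def Let_def by (simp add: aimd_T_def)
qed

lemma aimd_X_case_nat_after_jump:
  assumes "0 \<le> s" "s \<le> t" "t - s < aimd_T \<omega> (Suc k)"
  shows "aimd_X p x (case_nat s \<omega>) t = aimd_X p (p * (x + s)) \<omega> (t - s)"
proof -
  let ?e = "case_nat s \<omega>"
  have not_first: "\<not> t < aimd_T ?e (Suc 0)"
    using assms(2) by (simp add: aimd_T_def)
  have later: "t < aimd_T ?e (Suc (Suc k))"
    unfolding aimd_T_case_nat_Suc using assms(3) by simp
  have shifted: "(\<lambda>m. t < aimd_T ?e (Suc (Suc m))) = (\<lambda>m. t - s < aimd_T \<omega> (Suc m))"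
    unfolding aimd_T_case_nat_Suc by (rule ext) linarith
  define m where "m = (LEAST m. t - s < aimd_T \<omega> (Suc m))"
  have "(LEAST j. t < aimd_T ?e (Suc j)) = Suc m"
    unfolding Least_Suc[OF later not_first] shifted m_def ..
  then have "aimd_X p x ?e t = aimd_Y p x ?e (Suc m) + (t - aimd_T ?e (Suc m))"
    unfolding aimd_X_def Let_def by simp
  also have "\<dots> = aimd_X p (p * (x + s)) \<omega> (t - s)"
    unfolding aimd_Y_case_nat_Suc aimd_T_case_nat_Suc aimd_X_def Let_def m_def by simp
  finally show ?thesis .
qed

lemma cInf_Int_atMost:
  fixes A :: "'a :: conditionally_complete_linorder set"
  assumes "t \<in> A" "bdd_below A"
  shows "Inf (A \<inter> {..t}) = Inf A"
proof (rule antisym)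
  have bdd: "bdd_below (A \<inter> {..t})"
    using assms(2) by (rule bdd_below_mono) auto
  show "Inf A \<le> Inf (A \<inter> {..t})"
    using assms by (intro cInf_superset_mono) auto
  show "Inf (A \<inter> {..t}) \<le> Inf A"
  proof (rule cInf_greatest)
    fix y
    assume "y \<in> A"
    have "Inf (A \<inter> {..t}) \<le> min y t"
      using \<open>y \<in> A\<close> assms(1) bdd by (cases "y \<le> t") (auto intro: cInf_lower simp: min_def)
    then show "Inf (A \<inter> {..t}) \<le> y"
      by simp
  qed (use assms in auto)
qed

lemma tau_up_case_nat_late:
  assumes "x \<le> a" "a - x < s"
  shows "tau_up p x a (case_nat s \<omega>) = a - x"
proof -
  let ?A = "passage_set p x a (case_nat s \<omega>)"
  have below: "?A \<subseteq> {a - x..}"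
  proof
    fix t
    assume t: "t \<in> ?A"
    show "t \<in> {a - x..}"
    proof (cases "t < s")
      case True
      then show ?thesis
        using t aimd_X_case_nat_before_jump[OF True] by (auto simp: passage_set_def)
    qed (use assms in auto)
  qed
  have "{a - x<..<s} \<subseteq> ?A"
    using assms aimd_X_case_nat_before_jump[of _ s] by (auto simp: passage_set_def)
  then have "Inf ?A \<le> a - x"
    using cInf_superset_mono[of "{a - x<..<s}" ?A] assms by simp
  moreover have "a - x \<le> Inf ?A"
    using below \<open>{a - x<..<s} \<subseteq> ?A\<close> assms(2) by (intro cInf_greatest) auto
  ultimately show ?thesis
    by (simp add: tau_up_eq_Inf_passage_set)
qed

lemma tau_up_case_nat_early:
  assumes "0 \<le> x" "0 \<le> s" "x + s \<le> a" "0 \<le> p" "regular_path a \<omega>"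
  shows "tau_up p x a (case_nat s \<omega>) = s + tau_up p (p * (x + s)) a \<omega>"
proof -
  let ?x = "p * (x + s)"
  let ?A = "passage_set p x a (case_nat s \<omega>)" and ?A' = "passage_set p ?x a \<omega>"
  have "0 \<le> ?x" "0 \<le> a"
    using assms by auto
  then obtain t0 k where t0: "t0 \<in> ?A'" "t0 < aimd_T \<omega> (Suc k)"
    using regular_path_passage_before_jump[OF assms(5) _ assms(4)] by blast
  text \<open>Relating the two paths needs a later jump epoch, so the infima are compared inside
    the window up to s + t0.\<close>
  have after_jump: "t \<in> ?A \<longleftrightarrow> t - s \<in> ?A'" if "t \<le> s + t0" for t
  proof (cases "s \<le> t")
    case True
    then show ?thesis
      using that t0(2) assms(2) aimd_X_case_nat_after_jump[OF assms(2) True, of \<omega> k p x]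
      by (simp add: passage_set_def)
  next
    case False
    then show ?thesis
      using aimd_X_case_nat_before_jump[of t s p x \<omega>] assms(3) by (auto simp: passage_set_def)
  qed
  have window: "?A \<inter> {..s + t0} = (\<lambda>u. s + u) ` (?A' \<inter> {..t0})"
    by (auto simp: after_jump image_iff intro!: bexI[where x = "_ - s"])
  have "s + t0 \<in> ?A"
    using after_jump[of "s + t0"] t0(1) by simp
  then have "Inf ?A = Inf ((\<lambda>u. s + u) ` (?A' \<inter> {..t0}))"
    using cInf_Int_atMost[of "s + t0" ?A] by (simp add: window)
  also have "\<dots> = s + Inf (?A' \<inter> {..t0})"
    using t0(1) Inf_add_eq[of "\<lambda>u. u" "?A' \<inter> {..t0}" s] by (auto intro: bdd_below_mono)
  also have "\<dots> = s + Inf ?A'"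
    using cInf_Int_atMost[OF t0(1)] by simp
  finally show ?thesis
    by (simp add: tau_up_eq_Inf_passage_set)
qed

section \<open>Decomposition at the first jump\<close>

lemma prob_space_aimd_space: "0 < lam \<Longrightarrow> prob_space (aimd_space lam)"
  unfolding aimd_space_def by (rule prob_space_PiM) (rule prob_space_exp_law)

lemma sequence_space_exp_law: "0 < lam \<Longrightarrow> sequence_space (exp_law lam)"
  unfolding sequence_space_def product_prob_space_def product_prob_space_axioms_def
    product_sigma_finite_def
  using prob_space_exp_law by (auto intro: prob_space_imp_sigma_finite)

lemma AE_regular_path:
  assumes lam: "0 < lam" and a: "0 \<le> a"
  shows "AE \<omega> in aimd_space lam. regular_path a \<omega>"
proof -
  interpret S: sequence_space "exp_law lam"
    by (rule sequence_space_exp_law[OF lam])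
  have S: "aimd_space lam = S.S"
    unfolding aimd_space_def ..
  have nonneg: "AE \<omega> in aimd_space lam. \<forall>i. 0 \<le> \<omega> i"
    unfolding AE_all_countable aimd_space_def
    by (intro allI AE_PiM_component[OF prob_space_exp_law[OF lam]]) (auto simp: AE_exp_law_nonneg)
  define q where "q = 1 - exp (- a * lam)"
  have q: "0 \<le> q" "q < 1"
    unfolding q_def using lam a by auto
  have "(\<lambda>n. \<Prod>i\<le>n. measure (exp_law lam) {..a}) \<longlonglongrightarrow> measure S.S (Pi UNIV (\<lambda>_. {..a}))"
    by (rule S.measure_PiM_countable) simp
  moreover have "(\<lambda>n. \<Prod>i\<le>n. measure (exp_law lam) {..a}) = (\<lambda>n. q * q ^ n)"
    by (simp add: measure_exp_law_atMost[OF lam a] q_def)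
  moreover have "(\<lambda>n. q * q ^ n) \<longlonglongrightarrow> q * 0"
    by (intro tendsto_mult tendsto_const LIMSEQ_power_zero) (use q in auto)
  ultimately have "measure S.S (Pi UNIV (\<lambda>_. {..a})) = 0"
    using LIMSEQ_unique by fastforce
  then have "Pi UNIV (\<lambda>_. {..a}) \<in> null_sets S.S"
    using S.infprod_in_sets[of "\<lambda>_. {..a}"] by (simp add: S.emeasure_eq_measure null_sets_def)
  then have "AE \<omega> in aimd_space lam. \<omega> \<notin> Pi UNIV (\<lambda>_. {..a})"
    unfolding S by (rule AE_not_in)
  with nonneg show ?thesis
    by eventually_elim (auto simp: regular_path_def not_le)
qed

definition passage_discount :: "real \<Rightarrow> real \<Rightarrow> real \<Rightarrow> complex \<Rightarrow> (nat \<Rightarrow> real) \<Rightarrow> complex" where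
  "passage_discount p x a w e = exp (- w * complex_of_real (tau_up p x a e))"

lemma Z_up_eq_integral: "Z_up lam p w x a = (\<integral>e. passage_discount p x a w e \<partial>aimd_space lam)"
  unfolding Z_up_def passage_discount_def ..

lemma measurable_passage_discount [measurable]:
  "passage_discount p x a w \<in> borel_measurable (aimd_space lam)"
  unfolding passage_discount_def by measurable

text \<open>On the null set of paths that never pass above a, the passage time is the unspecified
  real Inf {}; hence the uniform bound below is not simply 1.\<close>

lemma norm_passage_discount_le:
  assumes "0 \<le> Re w"
  shows "norm (passage_discount p x a w e) \<le> max 1 (norm (exp (- w * complex_of_real (Inf {}))))"
proof (cases "passage_set p x a e = {}")
  case True
  then show ?thesis
    by (simp add: passage_discount_def tau_up_eq_Inf_passage_set)
next
  case False
  then have "0 \<le> tau_up p x a e"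
    unfolding tau_up_eq_Inf_passage_set by (intro cInf_greatest) (auto simp: passage_set_def)
  then show ?thesis
    using assms by (simp add: passage_discount_def mult_nonneg_nonneg le_max_iff_disj)
qed

lemma integrable_passage_discount_comp:
  assumes "finite_measure M" "0 \<le> Re w" "f \<in> measurable M (aimd_space lam)"
  shows "integrable M (\<lambda>z. passage_discount p x a w (f z))"
  by (rule finite_measure.integrable_const_bound[OF assms(1) AE_I2[OF norm_passage_discount_le[OF assms(2)]]])
     (rule measurable_compose[OF assms(3) measurable_passage_discount])

lemma norm_Z_up_le_1:
  assumes "0 < lam" "0 \<le> Re w" "0 \<le> x" "0 \<le> p" "0 \<le> a"
  shows "norm (Z_up lam p w x a) \<le> 1"
proof -
  interpret prob_space "aimd_space lam"
    by (rule prob_space_aimd_space[OF assms(1)])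
  have int: "integrable (aimd_space lam) (passage_discount p x a w)"
    using integrable_passage_discount_comp[OF finite_measure_axioms assms(2) measurable_ident_sets[OF refl]]
    by simp
  have "AE e in aimd_space lam. norm (passage_discount p x a w e) \<le> 1"
    using AE_regular_path[OF assms(1,5)]
  proof eventually_elim
    case (elim e)
    then show ?case
      using tau_up_nonneg[OF elim assms(3-5)] assms(2) by (simp add: passage_discount_def mult_nonneg_nonneg)
  qed
  then have "(\<integral>e. norm (passage_discount p x a w e) \<partial>aimd_space lam) \<le> 1"
    by (intro integral_le_const integrable_norm int)
  then show ?thesis
    unfolding Z_up_eq_integral using integral_norm_bound order_trans by blast
qed

lemma Z_up_first_jump:
  assumes lam: "0 < lam" and w: "0 \<le> Re w"
  shows "has_bochner_integral (exp_law lam)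
    (\<lambda>s. \<integral>\<omega>. passage_discount p x a w (case_nat s \<omega>) \<partial>aimd_space lam) (Z_up lam p w x a)"
proof -
  interpret S: sequence_space "exp_law lam"
    by (rule sequence_space_exp_law[OF lam])
  interpret P: pair_prob_space "exp_law lam" "aimd_space lam"
    by (intro pair_prob_space.intro pair_sigma_finite.intro prob_space_exp_law prob_space_aimd_space
        prob_space_imp_sigma_finite lam)
  have S: "aimd_space lam = S.S"
    unfolding aimd_space_def ..
  have shift: "(\<lambda>(s, \<omega>). case_nat s \<omega>) \<in> measurable (exp_law lam \<Otimes>\<^sub>M aimd_space lam) (aimd_space lam)"
    unfolding S by measurable
  have int: "integrable (exp_law lam \<Otimes>\<^sub>M aimd_space lam) (\<lambda>(s, \<omega>). passage_discount p x a w (case_nat s \<omega>))"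
    using integrable_passage_discount_comp[OF P.finite_measure_axioms w shift]
    by (simp add: case_prod_beta')
  have "Z_up lam p w x a = (\<integral>e. passage_discount p x a w e
      \<partial>distr (exp_law lam \<Otimes>\<^sub>M aimd_space lam) (aimd_space lam) (\<lambda>(s, \<omega>). case_nat s \<omega>))"
    unfolding Z_up_eq_integral S S.PiM_iter ..
  also have "\<dots> = (\<integral>z. passage_discount p x a w ((\<lambda>(s, \<omega>). case_nat s \<omega>) z) \<partial>(exp_law lam \<Otimes>\<^sub>M aimd_space lam))"
    by (rule integral_distr[OF shift]) simp
  also have "\<dots> = (\<integral>s. (\<integral>\<omega>. passage_discount p x a w (case_nat s \<omega>) \<partial>aimd_space lam) \<partial>exp_law lam)"
    using P.integral_fst'[OF int] by (simp add: case_prod_beta')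
  finally show ?thesis
    using P.integrable_fst'[OF int] by (simp add: has_bochner_integral_iff)
qed

lemma integral_passage_discount_case_nat:
  assumes lam: "0 < lam" and p: "0 \<le> p" and x: "0 \<le> x" "x \<le> a" and s: "0 \<le> s"
  shows "(\<integral>\<omega>. passage_discount p x a w (case_nat s \<omega>) \<partial>aimd_space lam) =
    (if a - x < s then exp (- w * complex_of_real (a - x))
     else exp (- w * complex_of_real s) * Z_up lam p w (p * (x + s)) a)"
proof -
  interpret prob_space "aimd_space lam"
    by (rule prob_space_aimd_space[OF lam])
  show ?thesis
  proof (cases "a - x < s")
    case True
    then show ?thesis
      using prob_space by (simp add: passage_discount_def tau_up_case_nat_late[OF x(2)])
  next
    case False
    have "AE \<omega> in aimd_space lam. passage_discount p x a w (case_nat s \<omega>)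
        = exp (- w * complex_of_real s) * passage_discount p (p * (x + s)) a w \<omega>"
      using AE_regular_path[OF lam order_trans[OF x]]
    proof eventually_elim
      case (elim \<omega>)
      then show ?case
        using tau_up_case_nat_early[OF x(1) s _ p elim] False
        by (simp add: passage_discount_def mult_exp_exp algebra_simps)
    qed
    moreover have "(\<lambda>\<omega>. passage_discount p x a w (case_nat s \<omega>)) \<in> borel_measurable (aimd_space lam)"
      unfolding aimd_space_def using measurable_passage_discount[of p x a w lam]
      unfolding aimd_space_def by measurable
    ultimately have "(\<integral>\<omega>. passage_discount p x a w (case_nat s \<omega>) \<partial>aimd_space lam)
        = (\<integral>\<omega>. exp (- w * complex_of_real s) * passage_discount p (p * (x + s)) a w \<omega> \<partial>aimd_space lam)"
      by (intro integral_cong_AE) simp_all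
    then show ?thesis
      using False by (simp add: Z_up_eq_integral)
  qed
qed

section \<open>Identification of the Laplace transform\<close>

lemma contraction_imp_zero:
  fixes g :: "'a \<Rightarrow> 'b :: real_normed_vector"
  assumes q: "0 \<le> q" "q < 1"
    and bound: "\<And>y. y \<in> S \<Longrightarrow> norm (g y) \<le> B"
    and contract: "\<And>C y. (\<And>z. z \<in> S \<Longrightarrow> norm (g z) \<le> C) \<Longrightarrow> y \<in> S \<Longrightarrow> norm (g y) \<le> q * C"
    and y: "y \<in> S"
  shows "g y = 0"
proof -
  have "norm (g z) \<le> q ^ n * B" if "z \<in> S" for n z
    using that
  proof (induction n arbitrary: z)
    case 0
    then show ?case by (simp add: bound)
  next
    case (Suc n)
    then show ?case
      using contract[of "q ^ n * B" z] by (simp add: mult.assoc)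
  qed
  moreover have "(\<lambda>n. q ^ n * B) \<longlonglongrightarrow> 0 * B"
    by (intro tendsto_mult_right LIMSEQ_power_zero) (use q in auto)
  ultimately have "norm (g y) \<le> 0"
    using y by (intro LIMSEQ_le_const[of "\<lambda>n. q ^ n * B"]) auto
  then show ?thesis by simp
qed

definition aimd_defect :: "real \<Rightarrow> real \<Rightarrow> complex \<Rightarrow> real \<Rightarrow> real \<Rightarrow> complex" where
  "aimd_defect lam p w a y =
     Z_up lam p w y a * aimd_H w lam p (complex_of_real a) - aimd_H w lam p (complex_of_real y)"

text \<open>Subtracting the renewal equations of Z and H, the defect solves the homogeneous
  equation; the integrand is only almost everywhere equal to the natural one, which avoids
  proving measurability of Z in its starting point.\<close>

lemma aimd_defect_renewal:
  assumes lam: "0 < lam" and p: "0 \<le> p" "p \<le> 1" and w: "0 \<le> Re w" and x: "0 \<le> x" "x \<le> a"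
  obtains f where "has_bochner_integral (exp_law lam) f (aimd_defect lam p w a x)"
    and "AE s in exp_law lam. f s = (if s \<le> a - x
           then exp (- w * complex_of_real s) * aimd_defect lam p w a (p * (x + s)) else 0)"
proof
  let ?H = "\<lambda>y. aimd_H w lam p (complex_of_real y)"
  let ?I = "\<lambda>s. \<integral>\<omega>. passage_discount p x a w (case_nat s \<omega>) \<partial>aimd_space lam"
  let ?\<psi> = "\<lambda>s. if a - x < s then exp (- w * complex_of_real (a - x)) * ?H a
      else exp (- w * complex_of_real s) * ?H (p * (x + s))"
  show "has_bochner_integral (exp_law lam) (\<lambda>s. ?I s * ?H a - ?\<psi> s) (aimd_defect lam p w a x)"
    unfolding aimd_defect_def
    using Z_up_first_jump[OF lam w, of p x a] aimd_H_renewal[OF lam p x, of w]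
    by (intro has_bochner_integral_diff has_bochner_integral_mult_left)
  show "AE s in exp_law lam. ?I s * ?H a - ?\<psi> s = (if s \<le> a - x
      then exp (- w * complex_of_real s) * aimd_defect lam p w a (p * (x + s)) else 0)"
    using AE_exp_law_nonneg
  proof eventually_elim
    case (elim s)
    then show ?case
      using integral_passage_discount_case_nat[OF lam p(1) x elim, of w]
      by (simp add: aimd_defect_def algebra_simps)
  qed
qed

lemma norm_aimd_defect_contracts:
  assumes lam: "0 < lam" and p: "0 \<le> p" "p < 1" and w: "0 \<le> Re w" and x: "0 \<le> x" "x < a"
    and C: "\<And>y. 0 \<le> y \<Longrightarrow> y < a \<Longrightarrow> norm (aimd_defect lam p w a y) \<le> C"
  shows "norm (aimd_defect lam p w a x) \<le> (1 - exp (- a * lam)) * C"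
proof -
  interpret prob_space "exp_law lam"
    by (rule prob_space_exp_law[OF lam])
  obtain f where f: "has_bochner_integral (exp_law lam) f (aimd_defect lam p w a x)"
    and f_eq: "AE s in exp_law lam. f s = (if s \<le> a - x
           then exp (- w * complex_of_real s) * aimd_defect lam p w a (p * (x + s)) else 0)"
    using aimd_defect_renewal[OF lam p(1) less_imp_le[OF p(2)] w x(1) less_imp_le[OF x(2)]] by blast
  have "norm (aimd_defect lam p w a 0) \<le> C"
    using x by (intro C) auto
  then have C_nonneg: "0 \<le> C"
    by (rule order_trans[OF norm_ge_zero])
  have f_bound: "AE s in exp_law lam. norm (f s) \<le> C * indicator {..a} s"
    using f_eq AE_exp_law_nonneg
  proof eventually_elim
    case (elim s)
    show ?case
    proof (cases "s \<le> a - x")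
      case True
      have "p * (x + s) \<le> p * a"
        using True p by (intro mult_left_mono) auto
      also have "\<dots> < a"
        using p x by simp
      finally have "norm (aimd_defect lam p w a (p * (x + s))) \<le> C"
        using p x elim by (intro C) auto
      moreover have "norm (exp (- w * complex_of_real s)) \<le> 1"
        using w elim by (simp add: mult_nonneg_nonneg)
      ultimately have "norm (exp (- w * complex_of_real s)) * norm (aimd_defect lam p w a (p * (x + s))) \<le> 1 * C"
        by (intro mult_mono) auto
      then show ?thesis
        using elim True x by (simp add: indicator_def norm_mult)
    qed (use elim C_nonneg in simp)
  qed
  have "norm (aimd_defect lam p w a x) \<le> (\<integral>s. norm (f s) \<partial>exp_law lam)"
    using f integral_norm_bound[of "exp_law lam" f] by (simp add: has_bochner_integral_iff)
  also have "\<dots> \<le> (\<integral>s. C * indicator {..a} s \<partial>exp_law lam)"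
    using f f_bound
    by (intro integral_mono_AE integrable_norm integrable_mult_right integrable_real_indicator)
       (auto simp: has_bochner_integral_iff emeasure_finite less_top[symmetric])
  also have "\<dots> = (1 - exp (- a * lam)) * C"
    using measure_exp_law_atMost[OF lam] x by simp
  finally show ?thesis .
qed

lemma aimd_defect_eq_0:
  assumes lam: "0 < lam" and p: "0 \<le> p" "p < 1" and w: "0 \<le> Re w" and x: "0 \<le> x" "x < a"
  shows "aimd_defect lam p w a x = 0"
proof -
  let ?H = "\<lambda>y. aimd_H w lam p (complex_of_real y)"
  have "bounded (?H ` {0..a})"
    using lam p
    by (intro compact_imp_bounded compact_continuous_image continuous_on_compose2[OF continuous_on_aimd_H]
        continuous_intros) auto
  then obtain B where B: "\<And>y. y \<in> {0..a} \<Longrightarrow> norm (?H y) \<le> B"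
    unfolding bounded_iff by blast
  have bound: "norm (aimd_defect lam p w a y) \<le> norm (?H a) + B" if y: "y \<in> {0..<a}" for y
  proof -
    have "norm (aimd_defect lam p w a y) \<le> norm (Z_up lam p w y a) * norm (?H a) + norm (?H y)"
      unfolding aimd_defect_def using norm_triangle_ineq4 norm_mult by metis
    also have "\<dots> \<le> 1 * norm (?H a) + B"
      using norm_Z_up_le_1[OF lam w, of y p a] B[of y] y p
      by (intro add_mono mult_right_mono) auto
    finally show ?thesis
      by simp
  qed
  show ?thesis
    by (rule contraction_imp_zero[where S = "{0..<a}" and q = "1 - exp (- a * lam)", OF _ _ bound])
       (use lam x norm_aimd_defect_contracts[OF lam p w] in auto)
qed

theorem mainTheorem1:
  fixes lam p x a :: real and w :: complex
  assumes "lam > 0" and "0 < p" and "p < 1"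
    and "0 < x" and "x < a" and "Re w > 0"
  shows "Z_up lam p w x a = Z_up lam p w 0 a / Z_up lam p w 0 x
    \<and> (\<forall>y>0. Z_up lam p w 0 y =
          1 / (1 + w * (\<Sum>n. complex_of_real (y ^ Suc n / fact (Suc n))
                    * (\<Prod>i\<in>{1..n}. w + complex_of_real lam - complex_of_real (lam * p ^ i)))))"
proof -
  let ?H = "\<lambda>y. aimd_H w lam p (complex_of_real y)"
  have lp: "0 \<le> lam" "0 \<le> p" "p \<le> 1"
    using assms by auto
  have H_nonzero: "?H y \<noteq> 0" and Z0: "Z_up lam p w 0 y = 1 / ?H y" if "0 < y" for y
  proof -
    have "Z_up lam p w 0 y * ?H y = 1"
      using aimd_defect_eq_0[of lam p w 0 y] assms that by (simp add: aimd_defect_def)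
    then show "?H y \<noteq> 0" "Z_up lam p w 0 y = 1 / ?H y"
      by (auto simp: eq_divide_eq)
  qed
  have "Z_up lam p w x a * ?H a = ?H x"
    using aimd_defect_eq_0[of lam p w x a] assms by (simp add: aimd_defect_def)
  then have "Z_up lam p w x a = ?H x / ?H a"
    using H_nonzero[of a] assms by (simp add: eq_divide_eq)
  also have "\<dots> = Z_up lam p w 0 a / Z_up lam p w 0 x"
    using Z0[of a] Z0[of x] assms by simp
  finally have "Z_up lam p w x a = Z_up lam p w 0 a / Z_up lam p w 0 x" .
  moreover have "w \<noteq> 0"
    using assms by auto
  ultimately show ?thesis
    using Z0 aimd_H_of_real[OF lp] by simp
qed

end
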